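(* Let $n\ge 1$ and let $X_1,\dots,X_n$ be operators in a complex Hilbert space $\mathcal{H}$, each of which is Hermitian or skew-Hermitian, all defined on a common invariant domain $D$ (i.e. $D\subset \mathrm{Dom}(X_j)$ and $X_jD\subset D$ for all $j$), and suppose that $[X_i,X_j]=c_{ij}I$ on $D$ for some constants $c_{ij}\in\mathbb{C}$, $i,j\in\{1,\dots,n\}$. Let $m^{(1)},\dots,m^{(n)}$ be sequences of positive numbers satisfying (A0), (A1), (A2), and such that the pair $(m^{(i)},m^{(j)})$ satisfies (A3) for every pair $(i,j)$ with $c_{ij}\neq 0$. Put $\mathbf{m}=(m^{(1)},\dots,m^{(n)})$, $\mathbf{X}=(X_1,\dots,X_n)$. Then a vector $u\in D$ belongs to $\mathcal{S}_{\mathbf{m}}(\mathbf{X})$ if and only if $u\in \mathcal{S}_{m^{(1)}}(X_1)\cap\dots\cap\mathcal{S}_{m^{(n)}}(X_n)$.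
   Context: Notation: $M(n)=\bigcup_{k\ge1}\{1,\dots,n\}^k$ is the set of multiindices; for $\alpha=(i_1,\dots,i_k)\in M(n)$, $|\alpha|=k$ and $|\alpha|_j=\mathrm{card}\{l: i_l=j\}$. For operators $\mathbf{X}=(X_1,\dots,X_n)$ in $\mathcal{H}$, $\mathbf{X}_\alpha=X_{i_1}\cdots X_{i_k}$ and $C^\infty(\mathbf{X})=\{u\in\mathcal{H}: u\in \mathrm{Dom}(\mathbf{X}_\alpha)\ \forall \alpha\in M(n)\}$. For sequences $m^{(j)}=(m^{(j)}_p)_{p\in\mathbb{N}}$ of positive reals and $\mathbf{m}=(m^{(1)},\dots,m^{(n)})$, set $\mathbf{m}_\alpha=m^{(1)}_{|\alpha|_1}\cdots m^{(n)}_{|\alpha|_n}$. The space of $\mathbf{m}$-Gelfand–Shilov–Roumieu vectors is $\mathcal{S}_{\mathbf{m}}(\mathbf{X})=\{u\in C^\infty(\mathbf{X}): \exists A,C>0,\ \|\mathbf{X}_\alpha u\|\le CA^{|\alpha|}\mathbf{m}_\alpha\ \forall\alpha\in M(n)\}$; in particular for a single operator $Y$ and a single sequence $m$, $\mathcal{S}_m(Y)=\{u\in C^\infty(Y):\exists A,C>0,\ \|Y^ku\|\le CA^km_k\ \forall k\ge1\}$. Conditions: (A0) $m^{(j)}_0=m^{(j)}_1=1$ for all $j$; (A1) $(m^{(j)}_p)^2\le m^{(j)}_{p-1}m^{(j)}_{p+1}$ for all $j$ and $p\ge1$; (A2) there is $H>0$ with $m^{(j)}_{p+q}\le H^{p+q}m^{(j)}_pm^{(j)}_q$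 for all $j$ and $p,q\in\mathbb{N}$. A pair of sequences $(m^{(j)},m^{(k)})$ satisfies (A3) if there is $L\ge1$ with $p\,m^{(j)}_{p-1}m^{(k)}_{p-1}\le L\,m^{(j)}_pm^{(k)}_p$ for all $p\ge1$. $[Y,Z]=YZ-ZY$. *)

theory Defs
  imports "HOL-Analysis.Analysis"
begin

definition hnorm :: "('h \<Rightarrow> 'h \<Rightarrow> complex) \<Rightarrow> 'h \<Rightarrow> real" where
  "hnorm ip u = sqrt (Re (ip u u))"

definition complex_hilbert_space ::
  "(complex \<Rightarrow> 'h::ab_group_add \<Rightarrow> 'h) \<Rightarrow> ('h \<Rightarrow> 'h \<Rightarrow> complex) \<Rightarrow> bool" where
  "complex_hilbert_space sc ip \<longleftrightarrow>
     Vector_Spaces.vector_space sc \<and>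
     (\<forall>x y z. ip (x + y) z = ip x z + ip y z) \<and>
     (\<forall>c x y. ip (sc c x) y = c * ip x y) \<and>
     (\<forall>x y. ip y x = cnj (ip x y)) \<and>
     (\<forall>x. 0 \<le> Re (ip x x)) \<and>
     (\<forall>x. ip x x = 0 \<longrightarrow> x = 0) \<and>
     (\<forall>f :: nat \<Rightarrow> 'h.
        (\<forall>e>0. \<exists>N. \<forall>p\<ge>N. \<forall>q\<ge>N. hnorm ip (f p - f q) < e) \<longrightarrow>
        (\<exists>l. \<forall>e>0. \<exists>N. \<forall>p\<ge>N. hnorm ip (f p - l) < e))"

definition is_operator ::
  "(complex \<Rightarrow> 'h::ab_group_add \<Rightarrow> 'h) \<Rightarrow> 'h set \<Rightarrow> ('h \<Rightarrow> 'h) \<Rightarrow> bool" where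
  "is_operator sc Dm X \<longleftrightarrow>
     0 \<in> Dm \<and> (\<forall>x\<in>Dm. \<forall>y\<in>Dm. x + y \<in> Dm) \<and> (\<forall>c. \<forall>x\<in>Dm. sc c x \<in> Dm) \<and>
     (\<forall>x\<in>Dm. \<forall>y\<in>Dm. X (x + y) = X x + X y) \<and> (\<forall>c. \<forall>x\<in>Dm. X (sc c x) = sc c (X x))"

definition hermitian_op :: "('h \<Rightarrow> 'h \<Rightarrow> complex) \<Rightarrow> 'h set \<Rightarrow> ('h \<Rightarrow> 'h) \<Rightarrow> bool" where
  "hermitian_op ip Dm X \<longleftrightarrow> (\<forall>u\<in>Dm. \<forall>v\<in>Dm. ip (X u) v = ip u (X v))"

definition skew_hermitian_op :: "('h \<Rightarrow> 'h \<Rightarrow> complex) \<Rightarrow> 'h set \<Rightarrow> ('h \<Rightarrow> 'h) \<Rightarrow> bool" where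
  "skew_hermitian_op ip Dm X \<longleftrightarrow> (\<forall>u\<in>Dm. \<forall>v\<in>Dm. ip (X u) v = - ip u (X v))"

text \<open>A multiindex \<open>(i_1,...,i_k)\<close> is the list \<open>[i_1,...,i_k]\<close>;
  \<open>X_alpha = X_{i_1} \<circ> ... \<circ> X_{i_k}\<close>, with its natural domain.\<close>

definition multiindices :: "nat \<Rightarrow> nat list set" where
  "multiindices n = {\<alpha>. \<alpha> \<noteq> [] \<and> set \<alpha> \<subseteq> {1..n}}"

fun mapply :: "(nat \<Rightarrow> 'h \<Rightarrow> 'h) \<Rightarrow> nat list \<Rightarrow> 'h \<Rightarrow> 'h" where
  "mapply X [] u = u"
| "mapply X (i # is) u = X i (mapply X is u)"

fun mdom :: "(nat \<Rightarrow> 'h set) \<Rightarrow> (nat \<Rightarrow> 'h \<Rightarrow> 'h) \<Rightarrow> nat list \<Rightarrow> 'h set" where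
  "mdom Dm X [] = UNIV"
| "mdom Dm X (i # is) = {u \<in> mdom Dm X is. mapply X is u \<in> Dm i}"

definition Cinf :: "nat \<Rightarrow> (nat \<Rightarrow> 'h set) \<Rightarrow> (nat \<Rightarrow> 'h \<Rightarrow> 'h) \<Rightarrow> 'h set" where
  "Cinf n Dm X = {u. \<forall>\<alpha>\<in>multiindices n. u \<in> mdom Dm X \<alpha>}"

definition mweight :: "(nat \<Rightarrow> nat \<Rightarrow> real) \<Rightarrow> nat \<Rightarrow> nat list \<Rightarrow> real" where
  "mweight m n \<alpha> = (\<Prod>j\<in>{1..n}. m j (count_list \<alpha> j))"

definition GSR :: "('h::ab_group_add \<Rightarrow> 'h \<Rightarrow> complex) \<Rightarrow> nat \<Rightarrow> (nat \<Rightarrow> 'h set) \<Rightarrow>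
    (nat \<Rightarrow> 'h \<Rightarrow> 'h) \<Rightarrow> (nat \<Rightarrow> nat \<Rightarrow> real) \<Rightarrow> 'h set" where
  "GSR ip n Dm X m = {u \<in> Cinf n Dm X. \<exists>A>0. \<exists>C>0. \<forall>\<alpha>\<in>multiindices n.
      hnorm ip (mapply X \<alpha> u) \<le> C * A ^ length \<alpha> * mweight m n \<alpha>}"

fun powdom :: "'h set \<Rightarrow> ('h \<Rightarrow> 'h) \<Rightarrow> nat \<Rightarrow> 'h set" where
  "powdom Dm Y 0 = UNIV"
| "powdom Dm Y (Suc k) = {u \<in> powdom Dm Y k. (Y ^^ k) u \<in> Dm}"

definition GSR1 :: "('h::ab_group_add \<Rightarrow> 'h \<Rightarrow> complex) \<Rightarrow> 'h set \<Rightarrow> ('h \<Rightarrow> 'h) \<Rightarrow>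
    (nat \<Rightarrow> real) \<Rightarrow> 'h set" where
  "GSR1 ip Dm Y m = {u. (\<forall>k\<ge>1. u \<in> powdom Dm Y k) \<and> (\<exists>A>0. \<exists>C>0. \<forall>k\<ge>1.
      hnorm ip ((Y ^^ k) u) \<le> C * A ^ k * m k)}"

definition condA0 :: "nat \<Rightarrow> (nat \<Rightarrow> nat \<Rightarrow> real) \<Rightarrow> bool" where
  "condA0 n m \<longleftrightarrow> (\<forall>j\<in>{1..n}. m j 0 = 1 \<and> m j 1 = 1)"

definition condA1 :: "nat \<Rightarrow> (nat \<Rightarrow> nat \<Rightarrow> real) \<Rightarrow> bool" where
  "condA1 n m \<longleftrightarrow> (\<forall>j\<in>{1..n}. \<forall>p\<ge>1. (m j p)\<^sup>2 \<le> m j (p - 1) * m j (p + 1))"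

definition condA2 :: "nat \<Rightarrow> (nat \<Rightarrow> nat \<Rightarrow> real) \<Rightarrow> bool" where
  "condA2 n m \<longleftrightarrow> (\<exists>H>0. \<forall>j\<in>{1..n}. \<forall>p q. m j (p + q) \<le> H ^ (p + q) * m j p * m j q)"

definition condA3 :: "(nat \<Rightarrow> real) \<Rightarrow> (nat \<Rightarrow> real) \<Rightarrow> bool" where
  "condA3 mj mk \<longleftrightarrow> (\<exists>L\<ge>1. \<forall>p\<ge>1. real p * mj (p - 1) * mk (p - 1) \<le> L * mj p * mk p)"

end

theory Submission
  imports Defs
begin

text \<open>Bounds for words in letters \<open>S \<union> {i}\<close> are obtained from bounds for words in \<open>S\<close> and for
  the powers of \<open>X\<^sub>i\<close>, so induction on the set of letters reduces the theorem to the
  single-operator hypotheses.  Since all commutators are scalars, sorting a word by adjacent swaps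
  expands \<open>X\<^sub>g u\<close> into sorted words from which \<open>r\<close> pairs of letters have been deleted,
  weighted by binomial coefficients; by (A3) each such deletion gains a factor \<open>1/r!\<close> in the
  weight, which absorbs the binomial growth.  Sorted words \<open>X\<^sub>i\<^sup>p X\<^sub>\<beta> u\<close> are handled through
  \<open>\<parallel>X\<^sub>i\<^sup>p X\<^sub>\<beta> u\<parallel>\<^sup>2 = |\<langle>X\<^sub>\<beta> u, X\<^sub>i\<^sup>2\<^sup>p X\<^sub>\<beta> u\<rangle>|\<close> ((skew-)hermiticity), re-sorting and
  Cauchy--Schwarz.  (A1) makes the weights super-multiplicative and (A2) controls the doubling
  \<open>m\<^sub>2\<^sub>p \<le> H\<^sup>2\<^sup>p m\<^sub>p\<^sup>2\<close> this costs.\<close>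

section \<open>Inner products\<close>

locale hilbert_space =
  fixes sc :: "complex \<Rightarrow> 'h::ab_group_add \<Rightarrow> 'h" and ip :: "'h \<Rightarrow> 'h \<Rightarrow> complex"
  assumes hilbert: "complex_hilbert_space sc ip"
begin

lemma ip_add_left: "ip (x + y) z = ip x z + ip y z"
  using hilbert unfolding complex_hilbert_space_def by (elim conjE) iprover

lemma ip_scale_left: "ip (sc t x) y = t * ip x y"
  using hilbert unfolding complex_hilbert_space_def by (elim conjE) iprover

lemma ip_conj: "ip y x = cnj (ip x y)"
  using hilbert unfolding complex_hilbert_space_def by (elim conjE) iprover

lemma ip_self_nonneg: "0 \<le> Re (ip x x)"
  using hilbert unfolding complex_hilbert_space_def by (elim conjE) iprover

lemma ip_self_eq_0: "ip x x = 0 \<Longrightarrow> x = 0"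
  using hilbert unfolding complex_hilbert_space_def by (elim conjE) iprover

lemma ip_add_right: "ip z (x + y) = ip z x + ip z y"
proof -
  have "ip z (x + y) = cnj (ip (x + y) z)" by (rule ip_conj)
  then show ?thesis by (simp add: ip_add_left ip_conj[of x z] ip_conj[of y z])
qed

lemma ip_scale_right: "ip x (sc t y) = cnj t * ip x y"
proof -
  have "ip x (sc t y) = cnj (ip (sc t y) x)" by (rule ip_conj)
  then show ?thesis by (simp add: ip_scale_left ip_conj[of y x])
qed

lemma ip_zero_right: "ip y 0 = 0"
  using ip_add_right[of y 0 0] by simp

lemma ip_self_real: "ip x x = complex_of_real (Re (ip x x))"
proof -
  have "ip x x = cnj (ip x x)" by (rule ip_conj)
  then have "Im (ip x x) = 0" by (metis cnj.simps(2) neg_equal_zero)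
  then show ?thesis by (simp add: complex_eq_iff)
qed

lemma cmod_ip_commute: "cmod (ip a b) = cmod (ip b a)"
proof -
  have "ip a b = cnj (ip b a)" by (rule ip_conj)
  then show ?thesis by simp
qed

lemma hnorm_nonneg: "0 \<le> hnorm ip x"
  using ip_self_nonneg[of x] by (simp add: hnorm_def)

lemma hnorm_sq: "(hnorm ip x)\<^sup>2 = Re (ip x x)"
  using ip_self_nonneg[of x] by (simp add: hnorm_def)

lemma cauchy_schwarz: "cmod (ip a b) \<le> hnorm ip a * hnorm ip b"
proof (cases "ip b b = 0")
  case True
  then have "b = 0" by (rule ip_self_eq_0)
  then show ?thesis by (simp add: ip_zero_right hnorm_nonneg)
next
  case False
  define A where "A = Re (ip a a)"
  define B where "B = Re (ip b b)"
  define z where "z = ip a b"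
  have B: "B > 0" using False ip_self_nonneg[of b] ip_self_real[of b] B_def
    by (metis less_eq_real_def of_real_0)
  have aa: "ip a a = complex_of_real A" and bb: "ip b b = complex_of_real B"
    using ip_self_real A_def B_def by simp_all
  define s where "s = - z / complex_of_real B"
  have "ip (a + sc s b) (a + sc s b) = A + cnj s * z + s * cnj z + s * cnj s * B"
    by (simp add: ip_add_left ip_add_right ip_scale_left ip_scale_right algebra_simps
        ip_conj[of a b] aa bb z_def)
  also have "\<dots> = A - z * cnj z / B"
    using B by (simp add: s_def field_simps)
  also have "z * cnj z = complex_of_real ((cmod z)\<^sup>2)"
    using complex_norm_square[of z] by simp
  finally have "0 \<le> A - (cmod z)\<^sup>2 / B"
    using ip_self_nonneg[of "a + sc s b"] B by simp
  then have "(cmod z)\<^sup>2 \<le> A * B" using B by (simp add: field_simps)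
  also have "A * B = (hnorm ip a * hnorm ip b)\<^sup>2"
    using hnorm_sq A_def B_def by (simp add: power_mult_distrib)
  finally show ?thesis
    unfolding z_def by (meson hnorm_nonneg mult_nonneg_nonneg power2_le_imp_le)
qed

lemma hnorm_scale: "hnorm ip (sc t a) = cmod t * hnorm ip a"
proof -
  have e: "t * cnj t = complex_of_real ((cmod t)\<^sup>2)" by (rule complex_norm_square[symmetric])
  have "ip (sc t a) (sc t a) = (t * cnj t) * ip a a"
    by (simp add: ip_scale_left ip_scale_right mult.assoc)
  also have "\<dots> = complex_of_real ((cmod t)\<^sup>2) * complex_of_real (Re (ip a a))"
    by (subst ip_self_real) (simp only: e)
  also have "\<dots> = complex_of_real ((cmod t)\<^sup>2 * Re (ip a a))" by (simp only: of_real_mult)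
  finally have "Re (ip (sc t a) (sc t a)) = (cmod t)\<^sup>2 * Re (ip a a)" by simp
  then show ?thesis by (simp add: hnorm_def real_sqrt_mult)
qed

lemma hnorm_triangle: "hnorm ip (a + b) \<le> hnorm ip a + hnorm ip b"
proof -
  have e: "ip (a + b) (a + b) = ip a a + ip a b + cnj (ip a b) + ip b b"
    by (simp add: ip_add_left ip_add_right ip_conj[of a b])
  have "(hnorm ip (a + b))\<^sup>2 = (hnorm ip a)\<^sup>2 + 2 * Re (ip a b) + (hnorm ip b)\<^sup>2"
    unfolding hnorm_sq e by simp
  also have "\<dots> \<le> (hnorm ip a)\<^sup>2 + 2 * (hnorm ip a * hnorm ip b) + (hnorm ip b)\<^sup>2"
    using cauchy_schwarz[of a b] complex_Re_le_cmod[of "ip a b"] by linarith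
  also have "\<dots> = (hnorm ip a + hnorm ip b)\<^sup>2" by (simp add: power2_eq_square algebra_simps)
  finally show ?thesis by (meson hnorm_nonneg add_nonneg_nonneg power2_le_imp_le)
qed

lemma hnorm_add_scale_le: "hnorm ip (a + sc t b) \<le> hnorm ip a + cmod t * hnorm ip b"
  using hnorm_triangle[of a "sc t b"] by (simp add: hnorm_scale)

lemma cmod_ip_add_scale_le: "cmod (ip w (a + sc t b)) \<le> cmod (ip w a) + cmod t * cmod (ip w b)"
  using norm_triangle_ineq[of "ip w a" "cnj t * ip w b"]
  by (simp add: ip_add_right ip_scale_right norm_mult)

end

section \<open>Words and inversions\<close>

lemma mapply_append: "mapply X (\<alpha> @ \<beta>) v = mapply X \<alpha> (mapply X \<beta> v)"
  by (induction \<alpha>) auto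

lemma mapply_replicate: "mapply X (replicate k j) v = (X j ^^ k) v"
  by (induction k) auto

fun inversions :: "nat set \<Rightarrow> nat set \<Rightarrow> nat list \<Rightarrow> nat" where
  "inversions A B [] = 0"
| "inversions A B (x # xs) =
     (if x \<in> A then length (filter (\<lambda>y. y \<in> B) xs) else 0) + inversions A B xs"

lemma inversions_swap:
  assumes "x \<in> A" "y \<in> B" "A \<inter> B = {}"
  shows "inversions A B (g1 @ x # y # g2) = Suc (inversions A B (g1 @ y # x # g2))"
  using assms by (induction g1) auto

lemma inversions_remove_pair: "inversions A B (g1 @ g2) \<le> inversions A B (g1 @ y # x # g2)"
  by (induction g1) (auto intro: add_mono)

lemma inversions_adjacent_pair:
  assumes "set g \<subseteq> A \<union> B" "inversions A B g \<noteq> 0"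
  shows "\<exists>g1 x y g2. g = g1 @ x # y # g2 \<and> x \<in> A \<and> y \<in> B"
  using assms
proof (induction g)
  case Nil then show ?case by simp
next
  case (Cons z g)
  show ?case
  proof (cases "inversions A B g = 0")
    case False
    then obtain g1 x y g2 where "g = g1 @ x # y # g2 \<and> x \<in> A \<and> y \<in> B" using Cons by auto
    then show ?thesis by (metis append_Cons)
  next
    case True
    with Cons.prems have zA: "z \<in> A" and ne: "filter (\<lambda>y. y \<in> B) g \<noteq> []"
      by (auto split: if_splits)
    then obtain w g' where g: "g = w # g'" by (cases g) auto
    show ?thesis
    proof (cases "w \<in> B")
      case True then show ?thesis using zA g by (metis append_Nil)
    next
      case False
      then have "w \<in> A" using Cons.prems g by auto
      moreover have "filter (\<lambda>y. y \<in> B) g' \<noteq> []" using ne g False by auto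
      ultimately have "inversions A B g \<noteq> 0" using g by simp
      with True show ?thesis by simp
    qed
  qed
qed

lemma inversions_zero_sorted:
  assumes "set g \<subseteq> A \<union> B" "inversions A B g = 0" "A \<inter> B = {}"
  shows "g = filter (\<lambda>x. x \<in> B) g @ filter (\<lambda>x. x \<in> A) g"
  using assms
proof (induction g)
  case Nil then show ?case by simp
next
  case (Cons z g)
  then have IH: "g = filter (\<lambda>x. x \<in> B) g @ filter (\<lambda>x. x \<in> A) g"
    by (auto split: if_splits)
  show ?case
  proof (cases "z \<in> A")
    case True
    then have "filter (\<lambda>x. x \<in> B) g = []" using Cons.prems by (auto split: if_splits)
    then show ?thesis using True Cons.prems IH by auto
  next
    case False
    then have "z \<in> B" using Cons.prems by auto
    then show ?thesis using False IH by simp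
  qed
qed

lemma inversions_le:
  "inversions A B g \<le> length (filter (\<lambda>x. x \<in> A) g) * length (filter (\<lambda>x. x \<in> B) g)"
  by (induction g) (auto simp: algebra_simps)

lemma filter_mem_singleton: "filter (\<lambda>x. x \<in> {i}) xs = replicate (count_list xs i) i"
  by (induction xs) auto

lemma count_list_replicate: "count_list (replicate s i) z = (if z = i then s else 0)"
  by (induction s) auto

lemma count_list_map_const:
  "\<forall>x\<in>set xs. f x = a \<Longrightarrow> count_list (map f xs) z = (if z = a then length xs else 0)"
  by (induction xs) auto

lemma length_le_if_count_list_le:
  assumes "set h \<subseteq> I" "set g \<subseteq> I" "finite I" "\<forall>z. count_list h z \<le> count_list g z"
  shows "length h \<le> length g"
proof -
  have "length h = (\<Sum>z\<in>I. count_list h z)" using sum_count_set[OF assms(1,3)] by simp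
  also have "\<dots> \<le> (\<Sum>z\<in>I. count_list g z)" using assms(4) by (intro sum_mono) auto
  also have "\<dots> = length g" using sum_count_set[OF assms(2,3)] by simp
  finally show ?thesis .
qed

lemma set_subset_if_count_list_le: "\<forall>z. count_list h z \<le> count_list g z \<Longrightarrow> set h \<subseteq> set g"
  by (metis count_list_0_iff le_zero_eq subsetI)

section \<open>Inequalities for weight sequences\<close>

lemma sum_binomial_Suc_split:
  fixes a :: "nat \<Rightarrow> real"
  shows "(\<Sum>r\<le>Suc I. real (Suc I choose r) * a r)
     = (\<Sum>r\<le>I. real (I choose r) * a r) + (\<Sum>r\<le>I. real (I choose r) * a (Suc r))"
proof -
  have "(\<Sum>r\<le>Suc I. real (Suc I choose r) * a r)
      = a 0 + (\<Sum>r\<le>I. real (Suc I choose Suc r) * a (Suc r))"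
    by (subst sum.atMost_Suc_shift) simp
  also have "\<dots> = a 0 + (\<Sum>r\<le>I. real (I choose r) * a (Suc r))
      + (\<Sum>r\<le>I. real (I choose Suc r) * a (Suc r))"
    by (simp add: sum.distrib algebra_simps)
  also have "(\<Sum>r\<le>I. real (I choose r) * a r) = a 0 + (\<Sum>r<I. real (I choose Suc r) * a (Suc r))"
    by (subst sum.atMost_shift) simp
  moreover have "(\<Sum>r<I. real (I choose Suc r) * a (Suc r)) = (\<Sum>r\<le>I. real (I choose Suc r) * a (Suc r))"
    by (simp add: lessThan_Suc_atMost[symmetric])
  ultimately show ?thesis by simp
qed

lemma log_convex_ratio_mono:
  fixes s :: "nat \<Rightarrow> real"
  assumes pos: "\<forall>p. s p > 0" and lc: "\<forall>p\<ge>1. (s p)\<^sup>2 \<le> s (p - 1) * s (p + 1)"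
  shows "s (Suc a) / s a \<le> s (Suc (a + b)) / s (a + b)"
proof (induction b)
  case (Suc b)
  have "(s (Suc (a + b)))\<^sup>2 \<le> s (a + b) * s (Suc (Suc (a + b)))"
    using lc[rule_format, of "Suc (a + b)"] by simp
  then have "s (Suc (a + b)) / s (a + b) \<le> s (Suc (Suc (a + b))) / s (Suc (a + b))"
    using pos by (simp add: divide_simps power2_eq_square mult.commute)
  with Suc show ?case by simp
qed simp

lemma log_convex_superadditive:
  fixes s :: "nat \<Rightarrow> real"
  assumes pos: "\<forall>p. s p > 0" and lc: "\<forall>p\<ge>1. (s p)\<^sup>2 \<le> s (p - 1) * s (p + 1)" and s0: "s 0 = 1"
  shows "s a * s b \<le> s (a + b)"
proof (induction b)
  case 0 then show ?case using s0 by simp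
next
  case (Suc b)
  have sb: "s b > 0" and sab: "s (a + b) > 0" using pos by blast+
  have "s a * s (Suc b) = (s a * s b) * (s (Suc b) / s b)" using sb by (simp add: field_simps)
  also have "\<dots> \<le> s (a + b) * (s (Suc b) / s b)"
    using Suc pos by (intro mult_right_mono) (auto intro: divide_nonneg_nonneg less_imp_le)
  also have "\<dots> \<le> s (a + b) * (s (Suc (a + b)) / s (a + b))"
    using log_convex_ratio_mono[OF pos lc, of b a] pos
    by (intro mult_left_mono) (auto simp: add.commute less_imp_le)
  also have "\<dots> = s (a + Suc b)" using sab by (simp add: field_simps)
  finally show ?case .
qed

lemma log_convex_prod_le:
  fixes s :: "nat \<Rightarrow> real" and d :: "'a \<Rightarrow> nat"
  assumes pos: "\<forall>p. s p > 0" and lc: "\<forall>p\<ge>1. (s p)\<^sup>2 \<le> s (p - 1) * s (p + 1)" and s0: "s 0 = 1"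
    and F: "finite F"
  shows "s k * (\<Prod>z\<in>F. s (d z)) \<le> s (k + (\<Sum>z\<in>F. d z))"
  using F
proof (induction F arbitrary: k rule: finite_induct)
  case (insert a F)
  have "s k * (\<Prod>z\<in>insert a F. s (d z)) = (s k * s (d a)) * (\<Prod>z\<in>F. s (d z))"
    using insert by (simp add: mult_ac)
  also have "\<dots> \<le> s (k + d a) * (\<Prod>z\<in>F. s (d z))"
    using log_convex_superadditive[OF pos lc s0] pos
    by (intro mult_right_mono prod_nonneg) (auto intro: less_imp_le)
  also have "\<dots> \<le> s (k + d a + (\<Sum>z\<in>F. d z))" by (rule insert.IH)
  finally show ?case using insert by (simp add: add.assoc)
qed simp

lemma fact_le_pow_mult:
  fixes s t :: "nat \<Rightarrow> real"
  assumes s0: "s 0 = 1" "t 0 = 1" and L: "L \<ge> 0"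
    and A3: "\<forall>p\<ge>1. real p * s (p - 1) * t (p - 1) \<le> L * s p * t p"
  shows "fact d \<le> L ^ d * s d * t d"
proof (induction d)
  case 0 then show ?case using s0 by simp
next
  case (Suc d)
  have "fact (Suc d) = real (Suc d) * fact d" by simp
  also have "\<dots> \<le> real (Suc d) * (L ^ d * s d * t d)" using Suc by (intro mult_left_mono) auto
  also have "\<dots> = L ^ d * (real (Suc d) * s d * t d)" by (simp add: mult_ac)
  also have "\<dots> \<le> L ^ d * (L * s (Suc d) * t (Suc d))"
    using A3[rule_format, of "Suc d"] L by (intro mult_left_mono) auto
  also have "\<dots> = L ^ Suc d * s (Suc d) * t (Suc d)" by (simp add: mult_ac)
  finally show ?case .
qed

lemma fact_mult_le_shift:
  fixes s t :: "nat \<Rightarrow> real"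
  assumes pos: "\<forall>p. s p > 0" "\<forall>p. t p > 0" and s0: "s 0 = 1" "t 0 = 1" and L: "L \<ge> 0"
    and A3: "\<forall>p\<ge>1. real p * s (p - 1) * t (p - 1) \<le> L * s p * t p"
    and lc: "\<forall>p\<ge>1. (t p)\<^sup>2 \<le> t (p - 1) * t (p + 1)"
  shows "fact d * t k \<le> L ^ d * s d * t (k + d)"
proof -
  have nn: "0 \<le> L ^ d * s d" using pos(1) L by (simp add: less_imp_le)
  have "fact d * t k \<le> (L ^ d * s d * t d) * t k"
    using fact_le_pow_mult[OF s0 L A3] pos by (intro mult_right_mono) (auto intro: less_imp_le)
  also have "\<dots> = (L ^ d * s d) * (t k * t d)" by (simp add: mult_ac)
  also have "\<dots> \<le> (L ^ d * s d) * t (k + d)"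
    using log_convex_superadditive[OF pos(2) lc s0(2)] nn by (intro mult_left_mono) auto
  finally show ?thesis .
qed

lemma fact_add_le: "fact (a + b) \<le> 2 ^ (a + b) * fact a * (fact b :: nat)"
proof -
  have "fact a * fact b * ((a + b) choose a) = (fact (a + b) :: nat)"
    using binomial_fact_lemma[of a "a + b"] by simp
  moreover have "(a + b) choose a \<le> 2 ^ (a + b)" by (rule binomial_le_pow2)
  ultimately show ?thesis by (metis mult.commute mult_le_mono2 mult.assoc)
qed

lemma fact_sum_le:
  assumes "finite F"
  shows "fact (\<Sum>z\<in>F. d z) \<le> (2 ^ card F) ^ (\<Sum>z\<in>F. d z) * (\<Prod>z\<in>F. fact (d z) :: nat)"
  using assms
proof (induction F rule: finite_induct)
  case (insert a F)
  define R where "R = (\<Sum>z\<in>F. d z)"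
  have pow2: "(2::nat) ^ (d a + R) * (2 ^ card F) ^ R \<le> (2 ^ card (insert a F)) ^ (d a + R)"
  proof -
    have "(2::nat) ^ (d a + R) * (2 ^ card F) ^ R = 2 ^ (d a + R + card F * R)"
      by (simp only: power_add power_mult)
    also have "\<dots> \<le> 2 ^ ((card F + 1) * (d a + R))"
      by (intro power_increasing) (auto simp: algebra_simps)
    also have "\<dots> = (2 ^ (card F + 1)) ^ (d a + R)" by (rule power_mult)
    also have "\<dots> = (2 ^ card (insert a F)) ^ (d a + R)" using insert by simp
    finally show ?thesis .
  qed
  have "fact (\<Sum>z\<in>insert a F. d z) = (fact (d a + R) :: nat)" using insert by (simp add: R_def)
  also have "\<dots> \<le> 2 ^ (d a + R) * fact (d a) * fact R" by (rule fact_add_le)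
  also have "\<dots> \<le> 2 ^ (d a + R) * fact (d a) * ((2 ^ card F) ^ R * (\<Prod>z\<in>F. fact (d z)))"
    using insert.IH unfolding R_def by (intro mult_le_mono2)
  also have "\<dots> = (2 ^ (d a + R) * (2 ^ card F) ^ R) * (fact (d a) * (\<Prod>z\<in>F. fact (d z)))"
    by (simp add: mult_ac)
  also have "\<dots> \<le> (2 ^ card (insert a F)) ^ (d a + R) * (fact (d a) * (\<Prod>z\<in>F. fact (d z)))"
    using pow2 by (rule mult_le_mono1)
  finally show ?case using insert by (simp add: R_def)
qed simp

lemma fact_sum_le_pow:
  assumes "finite F" "card F \<le> N"
  shows "fact (\<Sum>z\<in>F. d z) \<le> (2 ^ N) ^ (\<Sum>z\<in>F. d z) * (\<Prod>z\<in>F. fact (d z) :: real)"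
proof -
  have "fact (\<Sum>z\<in>F. d z) \<le> (2 ^ card F) ^ (\<Sum>z\<in>F. d z) * (\<Prod>z\<in>F. fact (d z) :: nat)"
    using fact_sum_le[OF assms(1)] .
  also have "\<dots> \<le> (2 ^ N) ^ (\<Sum>z\<in>F. d z) * (\<Prod>z\<in>F. fact (d z))"
    using assms(2) by (intro mult_le_mono1 power_mono power_increasing) auto
  finally have "real (fact (\<Sum>z\<in>F. d z)) \<le> real ((2 ^ N) ^ (\<Sum>z\<in>F. d z) * (\<Prod>z\<in>F. fact (d z)))"
    by (simp only: of_nat_le_iff)
  then show ?thesis by (simp add: of_nat_prod)
qed

lemma pow_mult_fact_le: "y ^ r * fact y \<le> (fact (y + r) :: nat)"
proof (induction r)
  case (Suc r)
  have "y ^ Suc r * fact y = y * (y ^ r * fact y)" by simp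
  also have "\<dots> \<le> Suc (y + r) * fact (y + r)" using Suc by (intro mult_le_mono) auto
  finally show ?case by simp
qed simp

lemma pow_le_pow2_mult_fact: "y ^ r \<le> 2 ^ (y + r) * (fact r :: nat)"
proof -
  have "y ^ r * fact y \<le> 2 ^ (y + r) * fact y * fact r"
    using pow_mult_fact_le[of y r] fact_add_le[of y r] by linarith
  then have "y ^ r * fact y \<le> (2 ^ (y + r) * fact r) * fact y" by (simp add: mult_ac)
  then show ?thesis using fact_gt_zero[of y] by (simp only: mult_le_cancel2) simp
qed

lemma binomial_mult_le: "(P * b) choose r \<le> 2 ^ (P + b) * 4 ^ r * (fact r :: nat)"
proof -
  have "((P * b) choose r) * fact r \<le> (P * b) ^ r" by (rule binomial_fact_pow)
  also have "\<dots> = P ^ r * b ^ r" by (simp add: power_mult_distrib)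
  also have "\<dots> \<le> (2 ^ (P + r) * fact r) * (2 ^ (b + r) * fact r)"
    by (intro mult_le_mono pow_le_pow2_mult_fact)
  also have "\<dots> = (2 ^ (P + b) * 4 ^ r * fact r) * fact r"
    by (simp add: power_add mult_ac flip: power_mult_distrib)
  finally show ?thesis using fact_gt_zero[of r] by (simp only: mult_le_cancel2) simp
qed

lemma binomial_power_div_fact_le:
  fixes y L :: real
  assumes y: "0 \<le> y" and L: "0 \<le> L" and r: "r \<le> P"
  shows "real ((P * b) choose r) * y ^ r * (L ^ r / fact r) \<le> 2 ^ (P + b) * (4 * max 1 (y * L)) ^ P"
proof -
  have "real ((P * b) choose r) \<le> real (2 ^ (P + b) * 4 ^ r * fact r)"
    using binomial_mult_le[of P b r] by (simp only: of_nat_le_iff)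
  then have "real ((P * b) choose r) * y ^ r * (L ^ r / fact r)
      \<le> (2 ^ (P + b) * 4 ^ r * fact r) * y ^ r * (L ^ r / fact r)"
    using y L by (intro mult_right_mono) auto
  also have "\<dots> = 2 ^ (P + b) * (4 * (y * L)) ^ r"
    by (simp add: power_mult_distrib)
  also have "\<dots> \<le> 2 ^ (P + b) * (4 * max 1 (y * L)) ^ r"
    using y L by (intro mult_left_mono power_mono) auto
  also have "\<dots> \<le> 2 ^ (P + b) * (4 * max 1 (y * L)) ^ P"
    using r by (intro mult_left_mono power_increasing) auto
  finally show ?thesis .
qed

lemma binomial_weighted_sum_bound:
  fixes y L K :: real
  assumes y: "0 \<le> y" and L: "0 \<le> L" and K: "0 \<le> K"
  shows "(\<Sum>r\<le>P * b. real ((P * b) choose r) * y ^ r * (if r \<le> P then K * L ^ r / fact r else 0))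
     \<le> K * (16 * max 1 (y * L)) ^ (P + b)"
proof -
  define Y where "Y = 4 * max 1 (y * L)"
  have Y1: "1 \<le> Y" unfolding Y_def by simp
  define T where "T = K * 2 ^ (P + b) * Y ^ P"
  have T0: "0 \<le> T" unfolding T_def using K Y1 by simp
  have summand_le: "real ((P * b) choose r) * y ^ r * (K * L ^ r / fact r) \<le> T" if "r \<le> P" for r
    using mult_left_mono[OF binomial_power_div_fact_le[OF y L that, of b] K]
    unfolding T_def Y_def by (simp add: mult_ac)
  have "(\<Sum>r\<le>P * b. real ((P * b) choose r) * y ^ r * (if r \<le> P then K * L ^ r / fact r else 0))
      \<le> (\<Sum>r\<le>P * b. if r \<le> P then T else 0)"
    using summand_le by (intro sum_mono) auto
  also have "\<dots> = (\<Sum>r\<in>{..P * b} \<inter> {..P}. T)"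
    by (subst sum.inter_restrict) simp_all
  also have "\<dots> \<le> (\<Sum>r\<le>P. T)"
    using T0 by (intro sum_mono2) auto
  also have "\<dots> \<le> 2 ^ P * T"
  proof -
    have "real (Suc P) \<le> real (2 ^ P)" using less_exp[of P] by (simp only: of_nat_le_iff Suc_le_eq)
    then show ?thesis using T0 by (simp add: mult_right_mono)
  qed
  also have "\<dots> \<le> K * 4 ^ (P + b) * Y ^ (P + b)"
  proof -
    have "(2::real) ^ P * 2 ^ (P + b) = 2 ^ (P + (P + b))" by (simp add: power_add)
    also have "\<dots> \<le> 2 ^ (2 * (P + b))" by (intro power_increasing) auto
    also have "\<dots> = 4 ^ (P + b)" by (simp only: power_mult) simp
    finally have "(2::real) ^ P * 2 ^ (P + b) \<le> 4 ^ (P + b)" .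
    moreover have "Y ^ P \<le> Y ^ (P + b)" using Y1 by (intro power_increasing) auto
    ultimately have "K * (2 ^ P * 2 ^ (P + b)) * Y ^ P \<le> K * 4 ^ (P + b) * Y ^ (P + b)"
      using K Y1 by (intro mult_mono mult_left_mono) auto
    then show ?thesis unfolding T_def by (simp add: mult_ac)
  qed
  also have "\<dots> = K * (16 * max 1 (y * L)) ^ (P + b)"
  proof -
    have "(4::real) ^ (P + b) * Y ^ (P + b) = (4 * Y) ^ (P + b)" by (rule power_mult_distrib[symmetric])
    then show ?thesis unfolding Y_def by (simp only: mult.assoc) simp
  qed
  finally show ?thesis .
qed

lemma finite_common_bound:
  fixes P :: "'a \<Rightarrow> real \<Rightarrow> bool"
  assumes "finite I" "\<forall>x\<in>I. \<exists>L\<ge>1. P x L" "\<forall>x\<in>I. \<forall>L L'. P x L \<longrightarrow> L \<le> L' \<longrightarrow> P x L'"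
  shows "\<exists>L\<ge>1. \<forall>x\<in>I. P x L"
  using assms
proof (induction I rule: finite_induct)
  case (insert a F)
  obtain L1 where L1: "L1 \<ge> 1" "P a L1" using insert.prems by blast
  obtain L2 where L2: "L2 \<ge> 1" "\<forall>x\<in>F. P x L2" using insert.IH insert.prems by blast
  have "\<forall>x\<in>insert a F. P x (max L1 L2)" using insert.prems(2) L1 L2 by auto
  then show ?case using L1 by (intro exI[of _ "max L1 L2"]) auto
qed auto

lemma condA2_doubling:
  assumes "condA2 n m" and pos: "\<forall>j\<in>{1..n}. \<forall>p. m j p > 0"
  obtains H where "H \<ge> 1" "\<forall>j\<in>{1..n}. \<forall>p. m j (p + p) \<le> H ^ (p + p) * m j p * m j p"
proof -
  obtain H0 where H0: "\<forall>j\<in>{1..n}. \<forall>p q. m j (p + q) \<le> H0 ^ (p + q) * m j p * m j q" "H0 > 0"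
    using assms(1) unfolding condA2_def by blast
  have "m j (p + p) \<le> max 1 H0 ^ (p + p) * m j p * m j p" if "j \<in> {1..n}" for j p
  proof -
    have "m j (p + p) \<le> H0 ^ (p + p) * (m j p * m j p)" using H0 that by (simp add: mult.assoc)
    also have "\<dots> \<le> max 1 H0 ^ (p + p) * (m j p * m j p)"
      using H0 pos that by (intro mult_right_mono power_mono) (auto intro: less_imp_le)
    finally show ?thesis by (simp add: mult.assoc)
  qed
  then show ?thesis by (intro that[of "max 1 H0"]) auto
qed

lemma condA3_common_constant:
  fixes m :: "nat \<Rightarrow> nat \<Rightarrow> real" and c :: "nat \<Rightarrow> nat \<Rightarrow> complex"
  assumes pos: "\<forall>j\<in>{1..n}. \<forall>p. m j p > 0"
    and A3: "\<forall>i\<in>{1..n}. \<forall>j\<in>{1..n}. c i j \<noteq> 0 \<longrightarrow> condA3 (m i) (m j)"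
  obtains L where "L \<ge> 1" "\<forall>i\<in>{1..n}. \<forall>j\<in>{1..n}. c i j \<noteq> 0 \<or> c j i \<noteq> 0 \<longrightarrow>
      (\<forall>p\<ge>1. real p * m i (p - 1) * m j (p - 1) \<le> L * m i p * m j p)"
proof -
  define P where "P x L \<longleftrightarrow> (c (fst x) (snd x) \<noteq> 0 \<or> c (snd x) (fst x) \<noteq> 0 \<longrightarrow>
      (\<forall>p\<ge>1. real p * m (fst x) (p - 1) * m (snd x) (p - 1) \<le> L * m (fst x) p * m (snd x) p))"
    for x L
  have "\<exists>L\<ge>1. \<forall>x\<in>{1..n} \<times> {1..n}. P x L"
  proof (rule finite_common_bound)
    show "\<forall>x\<in>{1..n} \<times> {1..n}. \<exists>L\<ge>1. P x L"
    proof
      fix x assume "x \<in> {1..n} \<times> {1..n}"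
      then obtain i j where ij: "x = (i, j)" "i \<in> {1..n}" "j \<in> {1..n}" by auto
      consider "c i j \<noteq> 0" | "c j i \<noteq> 0" | "c i j = 0" "c j i = 0" by blast
      then show "\<exists>L\<ge>1. P x L"
      proof cases
        case 1
        then show ?thesis using A3 ij unfolding condA3_def P_def by auto
      next
        case 2
        then obtain L where "L \<ge> 1" "\<forall>p\<ge>1. real p * m j (p - 1) * m i (p - 1) \<le> L * m j p * m i p"
          using A3 ij unfolding condA3_def by blast
        then show ?thesis unfolding P_def ij by (intro exI[of _ L]) (auto simp: mult_ac)
      qed (auto simp: P_def ij)
    qed
    show "\<forall>x\<in>{1..n} \<times> {1..n}. \<forall>L L'. P x L \<longrightarrow> L \<le> L' \<longrightarrow> P x L'"
    proof (intro ballI allI impI)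
      fix x L L' assume x: "x \<in> {1..n} \<times> {1..n}" and "P x L" "L \<le> L'"
      moreover have "L * m (fst x) p * m (snd x) p \<le> L' * m (fst x) p * m (snd x) p" for p
        using \<open>L \<le> L'\<close> pos x by (intro mult_right_mono) (auto intro: less_imp_le)
      ultimately show "P x L'" unfolding P_def by (meson order_trans)
    qed
  qed simp
  then show ?thesis using that unfolding P_def by fastforce
qed

section \<open>Operators with scalar commutators\<close>

locale commutation_system = hilbert_space sc ip
  for sc :: "complex \<Rightarrow> 'h::ab_group_add \<Rightarrow> 'h" and ip +
  fixes n :: nat and Dm :: "nat \<Rightarrow> 'h set" and X :: "nat \<Rightarrow> 'h \<Rightarrow> 'h" and D :: "'h set"
    and c :: "nat \<Rightarrow> nat \<Rightarrow> complex"
  assumes operators: "\<forall>j\<in>{1..n}. is_operator sc (Dm j) (X j)"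
    and hermitian: "\<forall>j\<in>{1..n}. hermitian_op ip (Dm j) (X j) \<or> skew_hermitian_op ip (Dm j) (X j)"
    and invariant_domain: "\<forall>j\<in>{1..n}. D \<subseteq> Dm j \<and> X j ` D \<subseteq> D"
    and commutators: "\<forall>i\<in>{1..n}. \<forall>j\<in>{1..n}. \<forall>v\<in>D. X i (X j v) - X j (X i v) = sc (c i j) v"
begin

lemma X_in_D: "j \<in> {1..n} \<Longrightarrow> v \<in> D \<Longrightarrow> X j v \<in> D"
  using invariant_domain by blast

lemma D_subset_Dm: "j \<in> {1..n} \<Longrightarrow> v \<in> D \<Longrightarrow> v \<in> Dm j"
  using invariant_domain by blast

lemma mapply_in_D: "set g \<subseteq> {1..n} \<Longrightarrow> v \<in> D \<Longrightarrow> mapply X g v \<in> D"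
  by (induction g) (auto intro: X_in_D)

lemma D_subset_mdom: "set \<alpha> \<subseteq> {1..n} \<Longrightarrow> v \<in> D \<Longrightarrow> v \<in> mdom Dm X \<alpha>"
  by (induction \<alpha>) (auto intro!: D_subset_Dm mapply_in_D)

lemma D_subset_powdom:
  assumes "j \<in> {1..n}" "v \<in> D"
  shows "v \<in> powdom (Dm j) (X j) k"
proof (induction k)
  case (Suc k)
  have "mapply X (replicate k j) v \<in> D" using assms by (intro mapply_in_D) auto
  then show ?case using Suc assms D_subset_Dm by (simp add: mapply_replicate)
qed simp

lemma mapply_add_scale:
  assumes "set g \<subseteq> {1..n}" "a \<in> D" "b \<in> D"
  shows "mapply X g (a + sc t b) = mapply X g a + sc t (mapply X g b)"
  using assms
proof (induction g)
  case (Cons z g)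
  then have z: "z \<in> {1..n}" by simp
  have op: "is_operator sc (Dm z) (X z)" using operators z by blast
  have "mapply X g a \<in> Dm z" "mapply X g b \<in> Dm z"
    using Cons.prems mapply_in_D D_subset_Dm z by auto
  with op Cons show ?case unfolding is_operator_def by auto
qed simp

lemma mapply_swap:
  assumes "x \<in> {1..n}" "y \<in> {1..n}" "set g1 \<subseteq> {1..n}" "set g2 \<subseteq> {1..n}" "v \<in> D"
  shows "mapply X (g1 @ x # y # g2) v
    = mapply X (g1 @ y # x # g2) v + sc (c x y) (mapply X (g1 @ g2) v)"
proof -
  define w where "w = mapply X g2 v"
  have w: "w \<in> D" using assms mapply_in_D w_def by auto
  have "X x (X y w) = X y (X x w) + sc (c x y) w"
    using commutators assms w by (metis add.commute diff_eq_eq)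
  moreover have "X y (X x w) \<in> D" using w assms X_in_D by auto
  ultimately show ?thesis
    using mapply_add_scale[of g1 "X y (X x w)" w "c x y"] assms w
    by (simp add: mapply_append w_def)
qed

lemma cmod_ip_X_adjoint:
  assumes "j \<in> {1..n}" "a \<in> D" "b \<in> D"
  shows "cmod (ip (X j a) b) = cmod (ip a (X j b))"
  using hermitian assms D_subset_Dm
  unfolding hermitian_op_def skew_hermitian_op_def by (metis norm_minus_cancel)

lemma cmod_ip_mapply_left:
  assumes "set r \<subseteq> {1..n}" "a \<in> D" "b \<in> D"
  shows "cmod (ip (mapply X r a) b) = cmod (ip a (mapply X (rev r) b))"
  using assms
proof (induction r arbitrary: b)
  case (Cons z r)
  have "cmod (ip (mapply X (z # r) a) b) = cmod (ip (mapply X r a) (X z b))"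
    using Cons.prems cmod_ip_X_adjoint mapply_in_D by simp
  also have "\<dots> = cmod (ip a (mapply X (rev r) (X z b)))"
    using Cons X_in_D by auto
  finally show ?case by (simp add: mapply_append)
qed simp

lemma cmod_ip_mapply_right:
  assumes "set r \<subseteq> {1..n}" "a \<in> D" "b \<in> D"
  shows "cmod (ip a (mapply X r b)) = cmod (ip (mapply X (rev r) a) b)"
  using cmod_ip_mapply_left[OF assms(1,3,2)] by (simp add: cmod_ip_commute)

text \<open>\<open>reduces A B r g g'\<close>: up to reordering, \<open>g'\<close> is \<open>g\<close> with \<open>r\<close> pairs \<open>(x, y) \<in> A \<times> B\<close>,
  \<open>c x y \<noteq> 0\<close>, deleted; these are the words produced by expanding commutators.\<close>

definition reduces :: "nat set \<Rightarrow> nat set \<Rightarrow> nat \<Rightarrow> nat list \<Rightarrow> nat list \<Rightarrow> bool" where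
  "reduces A B r g g' \<longleftrightarrow> (\<exists>ps. length ps = r \<and>
     (\<forall>p\<in>set ps. fst p \<in> A \<and> snd p \<in> B \<and> c (fst p) (snd p) \<noteq> 0) \<and>
     (\<forall>z. count_list g z = count_list g' z + count_list (map fst ps) z + count_list (map snd ps) z))"

lemma reduces_refl: "reduces A B 0 g g"
  unfolding reduces_def by auto

lemma reduces_permute:
  "\<forall>z. count_list g z = count_list h z \<Longrightarrow> reduces A B r h g' \<Longrightarrow> reduces A B r g g'"
  unfolding reduces_def by simp

lemma reduces_Suc:
  assumes "reduces A B r (g1 @ g2) g'" "x \<in> A" "y \<in> B" "c x y \<noteq> 0"
  shows "reduces A B (Suc r) (g1 @ x # y # g2) g'"
proof -
  obtain ps where "length ps = r" "\<forall>p\<in>set ps. fst p \<in> A \<and> snd p \<in> B \<and> c (fst p) (snd p) \<noteq> 0"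
    "\<forall>z. count_list (g1 @ g2) z = count_list g' z + count_list (map fst ps) z + count_list (map snd ps) z"
    using assms(1) unfolding reduces_def by blast
  then show ?thesis
    unfolding reduces_def using assms by (intro exI[of _ "(x, y) # ps"]) auto
qed

lemma reduces_singleton_left:
  assumes "reduces {i} B r g g'"
  obtains ys where "length ys = r" "set ys \<subseteq> {y \<in> B. c i y \<noteq> 0}"
    "\<forall>z. count_list g z = count_list g' z + (if z = i then r else 0) + count_list ys z"
proof -
  obtain ps where ps: "length ps = r" "\<forall>p\<in>set ps. fst p = i \<and> snd p \<in> B \<and> c (fst p) (snd p) \<noteq> 0"
    "\<forall>z. count_list g z = count_list g' z + count_list (map fst ps) z + count_list (map snd ps) z"
    using assms unfolding reduces_def by blast
  then have "count_list (map fst ps) z = (if z = i then r else 0)" for z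
    using count_list_map_const[of ps fst i z] by auto
  with ps show ?thesis by (intro that[of "map snd ps"]) auto
qed

lemma reduces_singleton_right:
  assumes "reduces A {i} r g g'"
  obtains xs where "length xs = r" "set xs \<subseteq> {x \<in> A. c x i \<noteq> 0}"
    "\<forall>z. count_list g z = count_list g' z + (if z = i then r else 0) + count_list xs z"
proof -
  obtain ps where ps: "length ps = r" "\<forall>p\<in>set ps. fst p \<in> A \<and> snd p = i \<and> c (fst p) (snd p) \<noteq> 0"
    "\<forall>z. count_list g z = count_list g' z + count_list (map fst ps) z + count_list (map snd ps) z"
    using assms unfolding reduces_def by blast
  then have "count_list (map snd ps) z = (if z = i then r else 0)" for z
    using count_list_map_const[of ps snd i z] by auto
  with ps show ?thesis by (intro that[of "map fst ps"]) auto
qed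

text \<open>Each swap of \<open>x \<in> A\<close> past \<open>y \<in> B\<close> removes one inversion and adds \<open>c x y\<close> times the
  word with both letters deleted.\<close>

lemma commutator_expansion_bound:
  assumes AB: "A \<inter> B = {}" "A \<subseteq> {1..n}" "B \<subseteq> {1..n}"
    and phi: "\<And>a b t. phi (a + sc t b) \<le> phi a + cmod t * phi b"
    and v: "v \<in> D" and cm: "\<forall>x\<in>A. \<forall>y\<in>B. cmod (c x y) \<le> cm" "0 \<le> cm"
    and g: "set g \<subseteq> A \<union> B" "inversions A B g \<le> I"
    and G: "\<And>r. 0 \<le> G r"
    and sorted: "\<And>r g'. reduces A B r g g' \<Longrightarrow> inversions A B g' = 0 \<Longrightarrow> phi (mapply X g' v) \<le> G r"
  shows "phi (mapply X g v) \<le> (\<Sum>r\<le>I. real (I choose r) * cm ^ r * G r)"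
  using g G sorted
proof (induction I arbitrary: g G)
  case 0
  then show ?case using reduces_refl by simp
next
  case (Suc I)
  have expansion_nonneg: "0 \<le> (\<Sum>r\<le>J. real (J choose r) * cm ^ r * F r)" if "\<And>r. 0 \<le> F r" for J F
    using cm(2) that by (intro sum_nonneg) auto
  show ?case
  proof (cases "inversions A B g = 0")
    case True
    then have "phi (mapply X g v) \<le> G 0" using Suc.prems(4) reduces_refl by blast
    also have "\<dots> = (\<Sum>r\<le>0. real (Suc I choose r) * cm ^ r * G r)" by simp
    also have "\<dots> \<le> (\<Sum>r\<le>Suc I. real (Suc I choose r) * cm ^ r * G r)"
      using Suc.prems(3) cm(2) by (intro sum_mono2) auto
    finally show ?thesis .
  next
    case False
    then obtain g1 x y g2 where gd: "g = g1 @ x # y # g2" "x \<in> A" "y \<in> B"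
      using inversions_adjacent_pair Suc.prems(1) by blast
    define gs where "gs = g1 @ y # x # g2"
    have sets: "set g1 \<subseteq> {1..n}" "set g2 \<subseteq> {1..n}" "x \<in> {1..n}" "y \<in> {1..n}"
      using Suc.prems(1) gd AB by auto
    have inv: "inversions A B g = Suc (inversions A B gs)"
      unfolding gd gs_def using inversions_swap gd AB by blast
    have swapped: "phi (mapply X gs v) \<le> (\<Sum>r\<le>I. real (I choose r) * cm ^ r * G r)"
    proof (rule Suc.IH)
      show "set gs \<subseteq> A \<union> B" using Suc.prems(1) unfolding gd gs_def by auto
      show "inversions A B gs \<le> I" using inv Suc.prems(2) by simp
      show "phi (mapply X g' v) \<le> G r" if "reduces A B r gs g'" "inversions A B g' = 0" for r g'
        using Suc.prems(4) reduces_permute[of g gs] that unfolding gd gs_def by simp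
    qed (use Suc.prems(3) in auto)
    have deleted: "cmod (c x y) * phi (mapply X (g1 @ g2) v)
        \<le> cm * (\<Sum>r\<le>I. real (I choose r) * cm ^ r * G (Suc r))"
    proof (cases "c x y = 0")
      case True
      then show ?thesis using cm(2) Suc.prems(3) expansion_nonneg[of "\<lambda>r. G (Suc r)" I] by simp
    next
      case False
      have "phi (mapply X (g1 @ g2) v) \<le> (\<Sum>r\<le>I. real (I choose r) * cm ^ r * G (Suc r))"
        (is "_ \<le> ?S")
      proof (rule Suc.IH)
        show "set (g1 @ g2) \<subseteq> A \<union> B" using Suc.prems(1) unfolding gd by auto
        show "inversions A B (g1 @ g2) \<le> I"
          using inversions_remove_pair[of A B g1 g2 y x] inv Suc.prems(2) unfolding gs_def by simp
        show "phi (mapply X g' v) \<le> G (Suc r)"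
          if "reduces A B r (g1 @ g2) g'" "inversions A B g' = 0" for r g'
          using Suc.prems(4) reduces_Suc[OF that(1) gd(2,3) False] that(2) unfolding gd by blast
      qed (use Suc.prems(3) in auto)
      then have "cmod (c x y) * phi (mapply X (g1 @ g2) v) \<le> cmod (c x y) * ?S"
        by (rule mult_left_mono) simp
      also have "\<dots> \<le> cm * ?S"
        using cm gd expansion_nonneg[of "\<lambda>r. G (Suc r)" I] Suc.prems(3) by (intro mult_right_mono) auto
      finally show ?thesis .
    qed
    have "phi (mapply X g v) \<le> phi (mapply X gs v) + cmod (c x y) * phi (mapply X (g1 @ g2) v)"
      using phi mapply_swap[OF sets(3,4,1,2) v] unfolding gd gs_def by metis
    also have "\<dots> \<le> (\<Sum>r\<le>I. real (I choose r) * cm ^ r * G r)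
        + (\<Sum>r\<le>I. real (I choose r) * cm ^ Suc r * G (Suc r))"
      using swapped deleted by (simp add: sum_distrib_left mult_ac)
    also have "\<dots> = (\<Sum>r\<le>Suc I. real (Suc I choose r) * cm ^ r * G r)"
      using sum_binomial_Suc_split[of I "\<lambda>r. cm ^ r * G r"] by (simp add: mult.assoc)
    finally show ?thesis .
  qed
qed

end

section \<open>Weighted word bounds\<close>

locale weighted_commutation_system = commutation_system sc ip n Dm X D c
  for sc :: "complex \<Rightarrow> 'h::ab_group_add \<Rightarrow> 'h" and ip n Dm X D c +
  fixes m :: "nat \<Rightarrow> nat \<Rightarrow> real" and L H :: real
  assumes m_pos: "\<forall>j\<in>{1..n}. \<forall>p. m j p > 0"
    and A0: "condA0 n m" and A1: "condA1 n m"
    and H: "H \<ge> 1" "\<forall>j\<in>{1..n}. \<forall>p. m j (p + p) \<le> H ^ (p + p) * m j p * m j p"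
    and L: "L \<ge> 1" "\<forall>i\<in>{1..n}. \<forall>j\<in>{1..n}. c i j \<noteq> 0 \<or> c j i \<noteq> 0 \<longrightarrow>
      (\<forall>p\<ge>1. real p * m i (p - 1) * m j (p - 1) \<le> L * m i p * m j p)"
begin

abbreviation wt :: "nat list \<Rightarrow> real" where
  "wt \<equiv> mweight m n"

lemma m_0: "j \<in> {1..n} \<Longrightarrow> m j 0 = 1"
  using A0 unfolding condA0_def by blast

lemma m_log_convex: "j \<in> {1..n} \<Longrightarrow> \<forall>p\<ge>1. (m j p)\<^sup>2 \<le> m j (p - 1) * m j (p + 1)"
  using A1 unfolding condA1_def by blast

lemma mweight_nonneg: "0 \<le> wt g"
  unfolding mweight_def using m_pos by (intro prod_nonneg) (auto intro: less_imp_le)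

lemma mweight_Nil: "wt [] = 1"
  unfolding mweight_def using m_0 by simp

lemma mweight_append_replicate:
  assumes i: "i \<in> {1..n}" and g: "count_list g i = 0"
  shows "wt (g @ replicate s i) = wt g * m i s"
proof -
  have other: "(\<Prod>z\<in>{1..n} - {i}. m z (count_list (g @ replicate s i) z))
      = (\<Prod>z\<in>{1..n} - {i}. m z (count_list g z))"
    by (intro prod.cong) (auto simp: count_list_replicate)
  show ?thesis
    using i g m_0[OF i] unfolding mweight_def
    by (simp add: prod.remove other count_list_replicate)
qed

lemma mweight_replicate: "j \<in> {1..n} \<Longrightarrow> wt (replicate k j) = m j k"
  using mweight_append_replicate[of j "[]" k] by (simp add: mweight_Nil)

lemma mweight_double:
  assumes g: "set g \<subseteq> {1..n}" and cnt: "\<forall>z. count_list g2 z = 2 * count_list g z"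
  shows "wt g2 \<le> H ^ (2 * length g) * (wt g)\<^sup>2"
proof -
  have "wt g2 = (\<Prod>z\<in>{1..n}. m z (count_list g z + count_list g z))"
    unfolding mweight_def using cnt by (intro prod.cong) (auto simp: mult_2)
  also have "\<dots> \<le> (\<Prod>z\<in>{1..n}. H ^ (2 * count_list g z) * (m z (count_list g z))\<^sup>2)"
    using H(2) m_pos
    by (intro prod_mono) (auto simp: power2_eq_square mult_2 mult.assoc less_imp_le)
  also have "\<dots> = H ^ (\<Sum>z\<in>{1..n}. 2 * count_list g z) * (wt g)\<^sup>2"
    by (simp add: mweight_def prod.distrib power_sum prod_power_distrib)
  also have "(\<Sum>z\<in>{1..n}. 2 * count_list g z) = 2 * length g"
    using sum_count_set[OF g] by (simp add: sum_distrib_left[symmetric])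
  finally show ?thesis .
qed

text \<open>This is where (A3) enters: deleting \<open>r\<close> letters \<open>i\<close> together with \<open>r\<close> letters \<open>j\<close> with
  \<open>c i j \<noteq> 0\<close> or \<open>c j i \<noteq> 0\<close> gains a factor \<open>r!\<close> in the weight.\<close>

lemma mweight_delete_pairs:
  assumes i: "i \<in> {1..n}" and ys: "length ys = r"
    "set ys \<subseteq> {j \<in> {1..n}. j \<noteq> i \<and> (c i j \<noteq> 0 \<or> c j i \<noteq> 0)}"
    and cnt: "\<forall>z. count_list g z = count_list g' z + (if z = i then r else 0) + count_list ys z"
  shows "fact r * wt g' \<le> (2 ^ n * L) ^ r * wt g"
proof -
  define F where "F = {1..n} - {i}"
  define d where "d z = count_list ys z" for z
  define k where "k z = count_list g' z" for z
  have finF: "finite F" and cardF: "card F \<le> n"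
    unfolding F_def by (auto simp: card_Diff_singleton_if)
  have "set ys \<subseteq> F" using ys unfolding F_def by auto
  then have sumd: "(\<Sum>z\<in>F. d z) = r"
    using sum_count_set[of ys F] finF ys unfolding d_def by simp
  have mi: "\<forall>p. m i p > 0" using m_pos i by blast
  have nonneg: "z \<in> {1..n} \<Longrightarrow> 0 \<le> m z p" for z p using m_pos by (simp add: less_imp_le)
  have wg': "wt g' = m i (k i) * (\<Prod>z\<in>F. m z (k z))"
    unfolding mweight_def F_def k_def using i by (simp add: prod.remove)
  have wg: "wt g = m i (k i + r) * (\<Prod>z\<in>F. m z (k z + d z))"
  proof -
    have "count_list ys i = 0" using ys by (auto intro: count_notin)
    then show ?thesis
      unfolding mweight_def F_def k_def d_def using i cnt by (simp add: prod.remove)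
  qed
  have multinomial: "fact r \<le> (2 ^ n) ^ r * (\<Prod>z\<in>F. fact (d z) :: real)"
    using fact_sum_le_pow[OF finF cardF, of d] sumd by simp
  have partner: "fact (d z) * m z (k z) \<le> L ^ d z * m i (d z) * m z (k z + d z)" if z: "z \<in> F" for z
  proof (cases "d z = 0")
    case True then show ?thesis using m_0[OF i] by simp
  next
    case False
    then have "z \<in> set ys" unfolding d_def by (simp add: count_list_0_iff)
    then have zz: "z \<in> {1..n}" "c i z \<noteq> 0 \<or> c z i \<noteq> 0" using ys by auto
    show ?thesis
      using fact_mult_le_shift[OF mi _ m_0[OF i] m_0[OF zz(1)] _ _ m_log_convex[OF zz(1)]]
        m_pos L i zz by auto
  qed
  have "fact r * wt g' \<le> ((2 ^ n) ^ r * (\<Prod>z\<in>F. fact (d z))) * wt g'"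
    using multinomial mweight_nonneg by (rule mult_right_mono)
  also have "\<dots> = (2 ^ n) ^ r * m i (k i) * (\<Prod>z\<in>F. fact (d z) * m z (k z))"
    unfolding wg' by (simp add: prod.distrib mult_ac)
  also have "\<dots> \<le> (2 ^ n) ^ r * m i (k i) * (\<Prod>z\<in>F. L ^ d z * m i (d z) * m z (k z + d z))"
    using partner nonneg i unfolding F_def
    by (intro mult_left_mono prod_mono) (auto intro: mult_nonneg_nonneg)
  also have "\<dots> = (2 ^ n) ^ r * L ^ r * (m i (k i) * (\<Prod>z\<in>F. m i (d z))) * (\<Prod>z\<in>F. m z (k z + d z))"
    by (simp add: prod.distrib power_sum[symmetric] sumd mult_ac)
  also have "\<dots> \<le> (2 ^ n) ^ r * L ^ r * m i (k i + r) * (\<Prod>z\<in>F. m z (k z + d z))"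
    using log_convex_prod_le[OF mi m_log_convex[OF i] m_0[OF i] finF, of "k i" d] sumd nonneg L(1)
    unfolding F_def by (intro mult_right_mono mult_left_mono prod_nonneg) auto
  also have "\<dots> = (2 ^ n * L) ^ r * wt g" using wg by (simp add: power_mult_distrib mult_ac)
  finally show ?thesis .
qed

definition word_bounded :: "nat set \<Rightarrow> 'h \<Rightarrow> real \<Rightarrow> real \<Rightarrow> bool" where
  "word_bounded S u C A \<longleftrightarrow>
     (\<forall>g. set g \<subseteq> S \<longrightarrow> hnorm ip (mapply X g u) \<le> C * A ^ length g * wt g)"

definition cbound :: real where
  "cbound = (\<Sum>x\<in>{1..n}. \<Sum>y\<in>{1..n}. cmod (c x y))"

lemma cbound_ge: "x \<in> {1..n} \<Longrightarrow> y \<in> {1..n} \<Longrightarrow> cmod (c x y) \<le> cbound"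
proof -
  assume x: "x \<in> {1..n}" and y: "y \<in> {1..n}"
  have "cmod (c x y) \<le> (\<Sum>y\<in>{1..n}. cmod (c x y))" using y by (intro member_le_sum) auto
  also have "\<dots> \<le> cbound" unfolding cbound_def using x by (intro member_le_sum sum_nonneg) auto
  finally show ?thesis .
qed

lemma cbound_nonneg: "0 \<le> cbound"
  unfolding cbound_def by (intro sum_nonneg) auto

abbreviation swap_factor :: real where
  "swap_factor \<equiv> 16 * max 1 (cbound * (2 ^ n * L))"

lemma cmod_ip_sorted_word_le:
  assumes S: "S \<subseteq> {1..n}" and i: "i \<in> {1..n}" "i \<notin> S" and u: "u \<in> D"
    and bS: "word_bounded S u C' A'" and bi: "word_bounded {i} u Ci Ai"
    and pos: "C' > 0" "A' > 0" "Ci > 0" "Ai > 0" and \<beta>: "set \<beta> \<subseteq> S" "set \<beta>' \<subseteq> S"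
  shows "cmod (ip (mapply X \<beta> u) (mapply X (\<beta>' @ replicate s i) u))
    \<le> C' * Ci * max 1 (max A' Ai) ^ (length \<beta>' + length \<beta> + s) * wt (rev \<beta>' @ \<beta> @ replicate s i)"
proof -
  define M where "M = max 1 (max A' Ai)"
  define \<gamma> where "\<gamma> = rev \<beta>' @ \<beta>"
  have s\<gamma>: "set \<gamma> \<subseteq> S" using \<beta> unfolding \<gamma>_def by auto
  have \<gamma>i: "count_list \<gamma> i = 0" using s\<gamma> i by (auto intro: count_notin)
  have si: "set (replicate s i) \<subseteq> {i}" by auto
  have "cmod (ip (mapply X \<beta> u) (mapply X (\<beta>' @ replicate s i) u))
      = cmod (ip (mapply X (rev \<beta>') (mapply X \<beta> u)) (mapply X (replicate s i) u))"
    unfolding mapply_append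
    by (rule cmod_ip_mapply_right) (use \<beta> S i u in \<open>auto intro!: mapply_in_D\<close>)
  also have "\<dots> = cmod (ip (mapply X \<gamma> u) (mapply X (replicate s i) u))"
    unfolding \<gamma>_def mapply_append ..
  also have "\<dots> \<le> hnorm ip (mapply X \<gamma> u) * hnorm ip (mapply X (replicate s i) u)"
    by (rule cauchy_schwarz)
  also have "\<dots> \<le> (C' * A' ^ length \<gamma> * wt \<gamma>) * (Ci * Ai ^ s * m i s)"
  proof (rule mult_mono)
    show "hnorm ip (mapply X \<gamma> u) \<le> C' * A' ^ length \<gamma> * wt \<gamma>"
      using bS s\<gamma> unfolding word_bounded_def by blast
    show "hnorm ip (mapply X (replicate s i) u) \<le> Ci * Ai ^ s * m i s"
      using bi[unfolded word_bounded_def, rule_format, OF si] mweight_replicate[OF i(1)] by simp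
  qed (use pos mweight_nonneg hnorm_nonneg in auto)
  also have "\<dots> = C' * Ci * (A' ^ length \<gamma> * Ai ^ s) * wt (\<gamma> @ replicate s i)"
    using mweight_append_replicate[OF i(1) \<gamma>i] by (simp add: mult_ac)
  also have "\<dots> \<le> C' * Ci * (M ^ length \<gamma> * M ^ s) * wt (\<gamma> @ replicate s i)"
    unfolding M_def using pos mweight_nonneg
    by (intro mult_right_mono mult_left_mono mult_mono power_mono) auto
  finally show ?thesis unfolding M_def \<gamma>_def by (simp add: power_add)
qed

lemma sorted_word_bound_left:
  assumes S: "S \<subseteq> {1..n}" and i: "i \<in> {1..n}" "i \<notin> S" and u: "u \<in> D"
    and bS: "word_bounded S u C' A'" and bi: "word_bounded {i} u Ci Ai"
    and pos: "C' > 0" "A' > 0" "Ci > 0" "Ai > 0" and \<beta>: "set \<beta> \<subseteq> S"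
    and red: "reduces {i} S r (replicate (p + p) i @ \<beta>) g'" and sorted: "inversions {i} S g' = 0"
  shows "fact r * cmod (ip (mapply X \<beta> u) (mapply X g' u))
    \<le> C' * Ci * max 1 (max A' Ai) ^ (2 * (p + length \<beta>)) * ((2 ^ n * L) ^ r
      * wt (replicate (p + p) i @ \<beta> @ \<beta>))"
proof -
  define g where "g = replicate (p + p) i @ \<beta>"
  define K where "K = C' * Ci * max 1 (max A' Ai) ^ (2 * (p + length \<beta>))"
  have K: "0 \<le> K" unfolding K_def using pos by simp
  obtain ys where ys: "length ys = r" "set ys \<subseteq> {y \<in> S. c i y \<noteq> 0}"
    and cnt: "\<forall>z. count_list g z = count_list g' z + (if z = i then r else 0) + count_list ys z"
    using reduces_singleton_left[OF red[folded g_def]] .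
  have cle: "\<forall>z. count_list g' z \<le> count_list g z" using cnt by simp
  have sg': "set g' \<subseteq> {i} \<union> S"
    using set_subset_if_count_list_le[OF cle] \<beta> unfolding g_def by auto
  have "set g' \<subseteq> {1..n}" "set g \<subseteq> {1..n}" using sg' S i \<beta> unfolding g_def by auto
  then have lg': "length g' \<le> p + p + length \<beta>"
    using length_le_if_count_list_le[of g' "{1..n}" g] cle unfolding g_def by simp
  define \<beta>' where "\<beta>' = filter (\<lambda>x. x \<in> S) g'"
  define s where "s = count_list g' i"
  have g'_eq: "g' = \<beta>' @ replicate s i"
    using inversions_zero_sorted[OF sg' sorted] i
    unfolding \<beta>'_def s_def filter_mem_singleton by auto
  have "set \<beta>' \<subseteq> S" unfolding \<beta>'_def by auto
  then have "cmod (ip (mapply X \<beta> u) (mapply X g' u))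
      \<le> C' * Ci * max 1 (max A' Ai) ^ (length \<beta>' + length \<beta> + s) * wt (rev \<beta>' @ \<beta> @ replicate s i)"
    unfolding g'_eq by (rule cmod_ip_sorted_word_le[OF S i u bS bi pos \<beta>])
  also have "\<dots> \<le> K * wt (rev \<beta>' @ \<beta> @ replicate s i)"
    unfolding K_def using lg' g'_eq pos mweight_nonneg
    by (intro mult_right_mono mult_left_mono power_increasing) auto
  finally have "fact r * cmod (ip (mapply X \<beta> u) (mapply X g' u))
      \<le> K * (fact r * wt (rev \<beta>' @ \<beta> @ replicate s i))"
    using mult_left_mono[of _ _ "fact r"] by (simp add: mult_ac)
  also have "\<dots> \<le> K * ((2 ^ n * L) ^ r * wt (g @ \<beta>))"
  proof (rule mult_left_mono[OF mweight_delete_pairs[OF i(1) ys(1)] K])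
    show "set ys \<subseteq> {j \<in> {1..n}. j \<noteq> i \<and> (c i j \<noteq> 0 \<or> c j i \<noteq> 0)}" using ys S i by auto
    show "\<forall>z. count_list (g @ \<beta>) z
        = count_list (rev \<beta>' @ \<beta> @ replicate s i) z + (if z = i then r else 0) + count_list ys z"
      using cnt unfolding g'_eq by simp
  qed
  finally show ?thesis unfolding K_def g_def by simp
qed

lemma cmod_ip_power_word_le:
  assumes S: "S \<subseteq> {1..n}" and i: "i \<in> {1..n}" "i \<notin> S" and u: "u \<in> D"
    and bS: "word_bounded S u C' A'" and bi: "word_bounded {i} u Ci Ai"
    and pos: "C' > 0" "A' > 0" "Ci > 0" "Ai > 0" and \<beta>: "set \<beta> \<subseteq> S"
  shows "cmod (ip (mapply X \<beta> u) (mapply X (replicate (p + p) i @ \<beta>) u))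
    \<le> C' * Ci * max 1 (max A' Ai) ^ (2 * (p + length \<beta>)) * wt (replicate (p + p) i @ \<beta> @ \<beta>)
      * swap_factor ^ (p + p + length \<beta>)"
proof -
  define b where "b = length \<beta>"
  define w where "w = mapply X \<beta> u"
  define g where "g = replicate (p + p) i @ \<beta>"
  define K where "K = C' * Ci * max 1 (max A' Ai) ^ (2 * (p + b)) * wt (g @ \<beta>)"
  define G where "G r = (if r \<le> p + p then K * (2 ^ n * L) ^ r / fact r else 0)" for r
  have K: "0 \<le> K" unfolding K_def using pos mweight_nonneg by simp
  have \<beta>i: "count_list \<beta> i = 0" using \<beta> i by (auto intro: count_notin)
  have "cmod (ip w (mapply X g u)) \<le> (\<Sum>r\<le>(p + p) * b. real (((p + p) * b) choose r) * cbound ^ r * G r)"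
  proof (rule commutator_expansion_bound[where A = "{i}" and B = S and phi = "\<lambda>v. cmod (ip w v)"])
    have "filter (\<lambda>x. x \<in> S) \<beta> = \<beta>" using \<beta> by (simp add: filter_id_conv subset_iff)
    with \<beta>i show "inversions {i} S g \<le> (p + p) * b"
      using inversions_le[of "{i}" S g] i
      unfolding g_def b_def filter_mem_singleton by (simp add: count_list_replicate)
    show "cmod (ip w (mapply X g' u)) \<le> G r"
      if red: "reduces {i} S r g g'" and sorted: "inversions {i} S g' = 0" for r g'
    proof -
      obtain ys where cnt: "\<forall>z. count_list g z = count_list g' z + (if z = i then r else 0) + count_list ys z"
        using reduces_singleton_left[OF red] .
      have "r \<le> count_list g i" using cnt[rule_format, of i] by simp
      also have "\<dots> = p + p" unfolding g_def using \<beta>i by (simp add: count_list_replicate)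
      finally have "r \<le> p + p" .
      moreover have "fact r * cmod (ip w (mapply X g' u)) \<le> K * (2 ^ n * L) ^ r"
        using sorted_word_bound_left[OF S i u bS bi pos \<beta> red[unfolded g_def] sorted]
        unfolding K_def w_def g_def b_def by (simp add: mult_ac)
      ultimately show ?thesis unfolding G_def by (simp add: field_simps)
    qed
  qed (use S i u \<beta> cbound_ge cbound_nonneg K L(1) cmod_ip_add_scale_le in
       \<open>auto simp: g_def G_def\<close>)
  also have "\<dots> \<le> K * swap_factor ^ (p + p + b)"
    unfolding G_def using binomial_weighted_sum_bound[OF cbound_nonneg _ K, of "2 ^ n * L"] L(1)
    by simp
  finally show ?thesis unfolding K_def w_def g_def b_def by simp
qed

lemma power_word_bound:
  assumes S: "S \<subseteq> {1..n}" and i: "i \<in> {1..n}" "i \<notin> S" and u: "u \<in> D"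
    and bS: "word_bounded S u C' A'" and bi: "word_bounded {i} u Ci Ai"
    and pos: "C' > 0" "A' > 0" "Ci > 0" "Ai > 0" and \<beta>: "set \<beta> \<subseteq> S"
  shows "hnorm ip (mapply X (replicate p i @ \<beta>) u)
    \<le> sqrt (C' * Ci) * (max 1 (max A' Ai) * H * swap_factor) ^ (p + length \<beta>)
      * wt (replicate p i @ \<beta>)"
proof -
  define M where "M = max 1 (max A' Ai)"
  define b where "b = length \<beta>"
  define W where "W = wt (replicate p i @ \<beta>)"
  define w where "w = mapply X \<beta> u"
  define a where "a = mapply X (replicate p i) w"
  have M1: "1 \<le> M" unfolding M_def by simp
  have iD: "set (replicate k i) \<subseteq> {1..n}" for k using i by auto
  have wD: "w \<in> D" unfolding w_def using \<beta> S u by (intro mapply_in_D) auto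
  have aD: "a \<in> D" unfolding a_def using iD wD by (rule mapply_in_D)
  have double: "wt (replicate (p + p) i @ \<beta> @ \<beta>) \<le> H ^ (2 * (p + b)) * W\<^sup>2"
    using mweight_double[of "replicate p i @ \<beta>"] i \<beta> S
    unfolding W_def b_def by (simp add: count_list_replicate subset_iff)
  have "(hnorm ip a)\<^sup>2 \<le> cmod (ip a a)"
    unfolding hnorm_sq by (rule complex_Re_le_cmod)
  also have "\<dots> = cmod (ip w (mapply X (replicate (p + p) i @ \<beta>) u))"
    using cmod_ip_mapply_left[OF iD wD aD]
    unfolding a_def w_def replicate_add by (simp add: mapply_append)
  also have "\<dots> \<le> C' * Ci * M ^ (2 * (p + b)) * wt (replicate (p + p) i @ \<beta> @ \<beta>)
      * swap_factor ^ (p + p + b)"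
    unfolding w_def M_def b_def by (rule cmod_ip_power_word_le[OF S i u bS bi pos \<beta>])
  also have "\<dots> \<le> C' * Ci * M ^ (2 * (p + b)) * (H ^ (2 * (p + b)) * W\<^sup>2) * swap_factor ^ (2 * (p + b))"
    using double pos M1 H(1) mweight_nonneg
    by (intro mult_mono mult_left_mono power_increasing) auto
  also have "\<dots> = (sqrt (C' * Ci) * (M * H * swap_factor) ^ (p + b) * W)\<^sup>2"
  proof -
    have "(sqrt (C' * Ci) * (M * H * swap_factor) ^ (p + b) * W)\<^sup>2
        = (sqrt (C' * Ci))\<^sup>2 * ((M * H * swap_factor) ^ (p + b))\<^sup>2 * W\<^sup>2"
      by (simp only: power_mult_distrib)
    also have "\<dots> = C' * Ci * (M ^ (2 * (p + b)) * H ^ (2 * (p + b)) * swap_factor ^ (2 * (p + b))) * W\<^sup>2"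
      using pos by (simp only: real_sqrt_pow2 power_even_eq[symmetric] power_mult_distrib) simp
    finally show ?thesis by (simp only: mult_ac)
  qed
  finally have "(hnorm ip a)\<^sup>2 \<le> (sqrt (C' * Ci) * (M * H * swap_factor) ^ (p + b) * W)\<^sup>2" .
  moreover have "0 \<le> sqrt (C' * Ci) * (M * H * swap_factor) ^ (p + b) * W"
    using pos M1 H(1) mweight_nonneg[of "replicate p i @ \<beta>"] unfolding W_def by simp
  ultimately have "hnorm ip a \<le> sqrt (C' * Ci) * (M * H * swap_factor) ^ (p + b) * W"
    by (rule power2_le_imp_le)
  then show ?thesis unfolding a_def w_def M_def b_def W_def by (simp add: mapply_append)
qed

lemma sorted_word_bound_right:
  assumes S: "S \<subseteq> {1..n}" and i: "i \<in> {1..n}" "i \<notin> S" and u: "u \<in> D"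
    and bS: "word_bounded S u C' A'" and bi: "word_bounded {i} u Ci Ai"
    and pos: "C' > 0" "A' > 0" "Ci > 0" "Ai > 0" and g: "set g \<subseteq> insert i S"
    and red: "reduces S {i} r g g'" and sorted: "inversions S {i} g' = 0"
  shows "fact r * hnorm ip (mapply X g' u)
    \<le> sqrt (C' * Ci) * (max 1 (max A' Ai) * H * swap_factor) ^ length g * ((2 ^ n * L) ^ r * wt g)"
proof -
  define E where "E = max 1 (max A' Ai) * H * swap_factor"
  have "1 * 1 * 1 \<le> max 1 (max A' Ai) * H * swap_factor" using H(1) by (intro mult_mono) auto
  then have E1: "1 \<le> E" unfolding E_def by simp
  obtain xs where xs: "length xs = r" "set xs \<subseteq> {x \<in> S. c x i \<noteq> 0}"
    and cnt: "\<forall>z. count_list g z = count_list g' z + (if z = i then r else 0) + count_list xs z"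
    using reduces_singleton_right[OF red] .
  have cle: "\<forall>z. count_list g' z \<le> count_list g z" using cnt by simp
  have sg': "set g' \<subseteq> S \<union> {i}" using set_subset_if_count_list_le[OF cle] g by auto
  have "set g' \<subseteq> {1..n}" "set g \<subseteq> {1..n}" using sg' g S i by auto
  then have lg': "length g' \<le> length g"
    using length_le_if_count_list_le[of g' "{1..n}" g] cle by simp
  define \<beta>' where "\<beta>' = filter (\<lambda>x. x \<in> S) g'"
  define s where "s = count_list g' i"
  have g'_eq: "g' = replicate s i @ \<beta>'"
    using inversions_zero_sorted[OF sg' sorted] i
    unfolding \<beta>'_def s_def filter_mem_singleton by auto
  have "set \<beta>' \<subseteq> S" unfolding \<beta>'_def by auto
  then have "hnorm ip (mapply X g' u) \<le> sqrt (C' * Ci) * E ^ length g' * wt g'"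
    using power_word_bound[OF S i u bS bi pos, of \<beta>' s] unfolding E_def
    by (simp only: g'_eq length_append length_replicate)
  also have "\<dots> \<le> sqrt (C' * Ci) * E ^ length g * wt g'"
    using lg' E1 pos mweight_nonneg by (intro mult_right_mono mult_left_mono power_increasing) auto
  finally have "fact r * hnorm ip (mapply X g' u) \<le> fact r * (sqrt (C' * Ci) * E ^ length g * wt g')"
    by (rule mult_left_mono) simp
  also have "\<dots> = sqrt (C' * Ci) * E ^ length g * (fact r * wt g')"
    by (simp only: mult_ac)
  also have "\<dots> \<le> sqrt (C' * Ci) * E ^ length g * ((2 ^ n * L) ^ r * wt g)"
  proof (rule mult_left_mono)
    have "set xs \<subseteq> {j \<in> {1..n}. j \<noteq> i \<and> (c i j \<noteq> 0 \<or> c j i \<noteq> 0)}"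
      using xs(2) S i by auto
    then show "fact r * wt g' \<le> (2 ^ n * L) ^ r * wt g"
      by (rule mweight_delete_pairs[OF i(1) xs(1) _ cnt])
  qed (use pos E1 in simp)
  finally show ?thesis unfolding E_def .
qed

lemma word_bound_insert:
  assumes S: "S \<subseteq> {1..n}" and i: "i \<in> {1..n}" "i \<notin> S" and u: "u \<in> D"
    and bS: "word_bounded S u C' A'" and bi: "word_bounded {i} u Ci Ai"
    and pos: "C' > 0" "A' > 0" "Ci > 0" "Ai > 0"
  shows "word_bounded (insert i S) u (sqrt (C' * Ci)) (max 1 (max A' Ai) * H * swap_factor * swap_factor)"
  unfolding word_bounded_def
proof (intro allI impI)
  fix g assume g: "set g \<subseteq> insert i S"
  define E where "E = max 1 (max A' Ai) * H * swap_factor"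
  have "1 * 1 * 1 \<le> max 1 (max A' Ai) * H * swap_factor" using H(1) by (intro mult_mono) auto
  then have E1: "1 \<le> E" unfolding E_def by simp
  define P where "P = count_list g i"
  define b where "b = length (filter (\<lambda>x. x \<in> S) g)"
  have len: "length g = P + b"
  proof -
    have "filter (\<lambda>x. x \<notin> {i}) g = filter (\<lambda>x. x \<in> S) g"
      using g i by (intro filter_cong) auto
    then show ?thesis
      using sum_length_filter_compl[of "\<lambda>x. x \<in> {i}" g] unfolding P_def b_def filter_mem_singleton
      by simp
  qed
  define K where "K = sqrt (C' * Ci) * E ^ length g * wt g"
  have K: "0 \<le> K" unfolding K_def using pos E1 mweight_nonneg by simp
  define G where "G r = (if r \<le> P then K * (2 ^ n * L) ^ r / fact r else 0)" for r
  have "hnorm ip (mapply X g u) \<le> (\<Sum>r\<le>P * b. real ((P * b) choose r) * cbound ^ r * G r)"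
  proof (rule commutator_expansion_bound[where A = S and B = "{i}" and phi = "hnorm ip"])
    show "inversions S {i} g \<le> P * b"
      using inversions_le[of S "{i}" g] unfolding P_def b_def filter_mem_singleton by (simp add: mult.commute)
    show "hnorm ip (mapply X g' u) \<le> G r"
      if red: "reduces S {i} r g g'" and sorted: "inversions S {i} g' = 0" for r g'
    proof -
      obtain xs where cnt: "\<forall>z. count_list g z = count_list g' z + (if z = i then r else 0) + count_list xs z"
        using reduces_singleton_right[OF red] .
      have "r \<le> P" using cnt[rule_format, of i] unfolding P_def by simp
      moreover have "fact r * hnorm ip (mapply X g' u) \<le> K * (2 ^ n * L) ^ r"
        using sorted_word_bound_right[OF S i u bS bi pos g red sorted]
        unfolding K_def E_def by (simp only: mult_ac)
      ultimately show ?thesis unfolding G_def by (simp add: pos_le_divide_eq mult.commute)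
    qed
    show "hnorm ip (a + sc t b) \<le> hnorm ip a + cmod t * hnorm ip b" for a b t
      by (rule hnorm_add_scale_le)
    show "0 \<le> G r" for r unfolding G_def using K L(1) by simp
  qed (use S i u g cbound_ge cbound_nonneg in auto)
  also have "\<dots> \<le> K * swap_factor ^ (P + b)"
    unfolding G_def using binomial_weighted_sum_bound[OF cbound_nonneg _ K, of "2 ^ n * L"] L(1)
    by simp
  also have "\<dots> = sqrt (C' * Ci) * (E * swap_factor) ^ length g * wt g"
    unfolding K_def len by (simp only: power_mult_distrib mult_ac)
  finally show "hnorm ip (mapply X g u)
      \<le> sqrt (C' * Ci) * (max 1 (max A' Ai) * H * swap_factor * swap_factor) ^ length g * wt g"
    unfolding E_def .
qed

lemma word_bound:
  assumes S: "S \<subseteq> {1..n}" and u: "u \<in> D"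
    and single: "\<forall>j\<in>S. \<exists>C>0. \<exists>A>0. word_bounded {j} u C A"
  shows "\<exists>C>0. \<exists>A>0. word_bounded S u C A"
proof -
  have "finite S" using S finite_subset by blast
  then show ?thesis using S single
  proof (induction S rule: finite_induct)
    case empty
    have "word_bounded {} u (hnorm ip u + 1) 1"
      unfolding word_bounded_def by (simp add: mweight_Nil)
    moreover have "hnorm ip u + 1 > 0" using hnorm_nonneg[of u] by simp
    ultimately show ?case by (meson zero_less_one)
  next
    case (insert i S)
    then obtain C' A' Ci Ai where
      "C' > 0" "A' > 0" "word_bounded S u C' A'" "Ci > 0" "Ai > 0" "word_bounded {i} u Ci Ai"
      by auto
    with insert have "word_bounded (insert i S) u (sqrt (C' * Ci))
        (max 1 (max A' Ai) * H * swap_factor * swap_factor)"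
      by (intro word_bound_insert[OF _ _ _ u]) auto
    moreover have "sqrt (C' * Ci) > 0" "max 1 (max A' Ai) * H * swap_factor * swap_factor > 0"
      using \<open>C' > 0\<close> \<open>Ci > 0\<close> H(1) by (simp_all add: zero_less_mult_iff less_max_iff_disj)
    ultimately show ?case by blast
  qed
qed

lemma word_bounded_subset: "T \<subseteq> S \<Longrightarrow> word_bounded S u C A \<Longrightarrow> word_bounded T u C A"
  unfolding word_bounded_def by blast

lemma word_bounded_if_nonempty:
  assumes "\<forall>g. g \<noteq> [] \<and> set g \<subseteq> S \<longrightarrow> hnorm ip (mapply X g u) \<le> C * A ^ length g * wt g"
    and "A \<ge> 0"
  shows "word_bounded S u (max C (hnorm ip u)) A"
  unfolding word_bounded_def
proof (intro allI impI)
  fix g assume g: "set g \<subseteq> S"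
  show "hnorm ip (mapply X g u) \<le> max C (hnorm ip u) * A ^ length g * wt g"
  proof (cases "g = []")
    case False
    then have "hnorm ip (mapply X g u) \<le> C * A ^ length g * wt g" using assms g by blast
    also have "\<dots> \<le> max C (hnorm ip u) * A ^ length g * wt g"
      using assms(2) mweight_nonneg by (intro mult_right_mono) auto
    finally show ?thesis .
  qed (simp add: mweight_Nil)
qed

lemma GSR_iff_word_bounded:
  assumes u: "u \<in> D"
  shows "u \<in> GSR ip n Dm X m \<longleftrightarrow> (\<exists>C>0. \<exists>A>0. word_bounded {1..n} u C A)"
proof
  assume "u \<in> GSR ip n Dm X m"
  then obtain A C where "A > 0" "C > 0"
    "\<forall>\<alpha>\<in>multiindices n. hnorm ip (mapply X \<alpha> u) \<le> C * A ^ length \<alpha> * wt \<alpha>"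
    unfolding GSR_def by blast
  then show "\<exists>C>0. \<exists>A>0. word_bounded {1..n} u C A"
    using word_bounded_if_nonempty[of "{1..n}" u C A]
    unfolding multiindices_def by (intro exI[of _ "max C (hnorm ip u)"]) auto
next
  assume "\<exists>C>0. \<exists>A>0. word_bounded {1..n} u C A"
  moreover have "u \<in> Cinf n Dm X"
    unfolding Cinf_def multiindices_def using D_subset_mdom u by blast
  ultimately show "u \<in> GSR ip n Dm X m"
    unfolding GSR_def word_bounded_def multiindices_def by blast
qed

lemma GSR1_iff_word_bounded:
  assumes j: "j \<in> {1..n}" and u: "u \<in> D"
  shows "u \<in> GSR1 ip (Dm j) (X j) (m j) \<longleftrightarrow> (\<exists>C>0. \<exists>A>0. word_bounded {j} u C A)"
proof -
  have words: "set g \<subseteq> {j} \<longleftrightarrow> g = replicate (length g) j" for g :: "nat list"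
    by (induction g) auto
  have power_bound: "hnorm ip (mapply X g u) \<le> C * A ^ length g * wt g
      \<longleftrightarrow> hnorm ip ((X j ^^ length g) u) \<le> C * A ^ length g * m j (length g)"
    if "set g \<subseteq> {j}" for g C A
    using that words[of g] mweight_replicate[OF j] mapply_replicate by metis
  show ?thesis
  proof
    assume "u \<in> GSR1 ip (Dm j) (X j) (m j)"
    then obtain A C where "A > 0" "C > 0" "\<forall>k\<ge>1. hnorm ip ((X j ^^ k) u) \<le> C * A ^ k * m j k"
      unfolding GSR1_def by blast
    then have "word_bounded {j} u (max C (hnorm ip u)) A"
      using power_bound by (intro word_bounded_if_nonempty) (auto simp: Suc_le_eq)
    then show "\<exists>C>0. \<exists>A>0. word_bounded {j} u C A"
      using \<open>A > 0\<close> \<open>C > 0\<close> by (intro exI[of _ "max C (hnorm ip u)"]) auto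
  next
    assume "\<exists>C>0. \<exists>A>0. word_bounded {j} u C A"
    then obtain C A where "C > 0" "A > 0" "word_bounded {j} u C A" by blast
    have "hnorm ip ((X j ^^ k) u) \<le> C * A ^ k * m j k" for k
    proof -
      have "set (replicate k j) \<subseteq> {j}" by auto
      then show ?thesis
        using \<open>word_bounded {j} u C A\<close> power_bound[of "replicate k j" C A]
        unfolding word_bounded_def by auto
    qed
    then show "u \<in> GSR1 ip (Dm j) (X j) (m j)"
      unfolding GSR1_def using D_subset_powdom[OF j u] \<open>C > 0\<close> \<open>A > 0\<close> by blast
  qed
qed

lemma GSR_iff_GSR1:
  assumes u: "u \<in> D"
  shows "u \<in> GSR ip n Dm X m \<longleftrightarrow> (\<forall>j\<in>{1..n}. u \<in> GSR1 ip (Dm j) (X j) (m j))"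
  unfolding GSR_iff_word_bounded[OF u]
  using GSR1_iff_word_bounded[OF _ u] word_bound[OF order_refl u] word_bounded_subset
  by (metis empty_subsetI insert_subset)

end

theorem theorem2p6:
  fixes sc :: "complex \<Rightarrow> 'h::ab_group_add \<Rightarrow> 'h"
    and ip :: "'h \<Rightarrow> 'h \<Rightarrow> complex"
    and n :: nat
    and Dm :: "nat \<Rightarrow> 'h set" and X :: "nat \<Rightarrow> 'h \<Rightarrow> 'h"
    and D :: "'h set"
    and c :: "nat \<Rightarrow> nat \<Rightarrow> complex"
    and m :: "nat \<Rightarrow> nat \<Rightarrow> real"
    and u :: 'h
  assumes H: "complex_hilbert_space sc ip"
    and n: "n \<ge> 1"
    and ops: "\<forall>j\<in>{1..n}. is_operator sc (Dm j) (X j)"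
    and herm: "\<forall>j\<in>{1..n}. hermitian_op ip (Dm j) (X j) \<or> skew_hermitian_op ip (Dm j) (X j)"
    and D_dom: "\<forall>j\<in>{1..n}. D \<subseteq> Dm j \<and> X j ` D \<subseteq> D"
    and comm: "\<forall>i\<in>{1..n}. \<forall>j\<in>{1..n}. \<forall>v\<in>D. X i (X j v) - X j (X i v) = sc (c i j) v"
    and mpos: "\<forall>j\<in>{1..n}. \<forall>p. m j p > 0"
    and A0: "condA0 n m" and A1: "condA1 n m" and A2: "condA2 n m"
    and A3: "\<forall>i\<in>{1..n}. \<forall>j\<in>{1..n}. c i j \<noteq> 0 \<longrightarrow> condA3 (m i) (m j)"
    and uD: "u \<in> D"
  shows "u \<in> GSR ip n Dm X m \<longleftrightarrow> (\<forall>j\<in>{1..n}. u \<in> GSR1 ip (Dm j) (X j) (m j))"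
proof -
  obtain H2 where H2: "H2 \<ge> 1" "\<forall>j\<in>{1..n}. \<forall>p. m j (p + p) \<le> H2 ^ (p + p) * m j p * m j p"
    using condA2_doubling[OF A2 mpos] .
  obtain L where L: "L \<ge> 1" "\<forall>i\<in>{1..n}. \<forall>j\<in>{1..n}. c i j \<noteq> 0 \<or> c j i \<noteq> 0 \<longrightarrow>
      (\<forall>p\<ge>1. real p * m i (p - 1) * m j (p - 1) \<le> L * m i p * m j p)"
    using condA3_common_constant[OF mpos A3] .
  interpret weighted_commutation_system sc ip n Dm X D c m L H2
    by unfold_locales (fact H ops herm D_dom comm mpos A0 A1 H2 L)+
  show ?thesis by (rule GSR_iff_GSR1[OF uD])
qed

end
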